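(* Over undirected graphs, the node classifier $\varphi_{\mathit{GadLin}}(x)$ is not expressible in $\mathrm{C}^2$: there is no $\mathrm{C}^2$ formula $\varphi(x)$ over the signature $\{E,P_1,P_2,P_3\}$ such that for every undirected graph $G$ of dimension 3 and every node $v$ of $G$, $G\models\varphi(v)$ iff $G$ is isomorphic to $\mathsf{gad}(G')$ for some directed graph $G'$ whose edge relation is a strict linear order.
   Context: A directed graph of dimension $d$ is $G=(V,E,\lambda)$ with $V$ finite, $E\subseteq V\times V$ without loops, $\lambda:V\to\{0,1\}^d$; it is viewed as a first-order structure with relation $E$ and unary predicates $P_i=\{v:\lambda(v)_i=1\}$. Undirected graphs are directed graphs with symmetric $E$; $\{v,w\}$ denotes the pair $(v,w),(w,v)$. $\mathrm{C}^2$ is the fragment of first-order logic with equality using only two variables $x,y$ but allowing counting quantifiers $\exists_k$ for every $k\in\mathbb{N}$ ("at least $k$ distinct elements such that"). The gadgetisation $\mathsf{gad}(G)$ of a directed graph $G=(V,E,\lambda)$ is the undirected graph $(V',E',\lambda')$ of dimension 3 such that for each edge $(u,w)\in E$: $V'$ contains $v_u^1, v_{(u,w)}^2, v_{(u,w)}^3, v_w^1$; $E'$ contains $\{v_u^1,v_{(u,w)}^2\}$, $\{v_{(u,w)}^2,v_{(u,w)}^3\}$, $\{v_{(u,w)}^3,v_w^1\}$; $\lambda'(v_u^1)=\lambda'(v_w^1)=(1,0,0)$, $\lambda'(v^2_{(u,w)})=(0,1,0)$, $\lambda'(v^3_{(u,w)})=(0,0,1)$ (no other nodes or edges). A strict linear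 order is an irreflexive, transitive, total relation. $\varphi_{\mathit{GadLin}}(x)$ accepts a node of $G$ iff $G$ is isomorphic to $\mathsf{gad}(G')$ for some strict linear order $G'$. *)

theory Defs
  imports Main
begin

(* A (labelled) directed graph: vertex set, edge relation, labelling.
   lab v i is coordinate i+1 of lambda(v) (i.e. v \<in> P_(i+1)); only
   coordinates i < d matter for a graph of dimension d. *)
record 'a graph =
  verts :: "'a set"
  edges :: "('a \<times> 'a) set"
  lab   :: "'a \<Rightarrow> nat \<Rightarrow> bool"

definition dgraph :: "'a graph \<Rightarrow> bool" where
  "dgraph G \<longleftrightarrow> finite (verts G) \<and> edges G \<subseteq> verts G \<times> verts G
      \<and> (\<forall>v. (v, v) \<notin> edges G)"

definition ugraph :: "'a graph \<Rightarrow> bool" where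
  "ugraph G \<longleftrightarrow> dgraph G \<and> sym (edges G)"

definition graph_iso :: "nat \<Rightarrow> 'a graph \<Rightarrow> 'b graph \<Rightarrow> bool" where
  "graph_iso d G H \<longleftrightarrow> (\<exists>f. bij_betw f (verts G) (verts H)
      \<and> (\<forall>u\<in>verts G. \<forall>w\<in>verts G. (u, w) \<in> edges G \<longleftrightarrow> (f u, f w) \<in> edges H)
      \<and> (\<forall>v\<in>verts G. \<forall>i<d. lab G v i = lab H (f v) i))"

datatype 'a gnode = N1 'a | N2 "'a \<times> 'a" | N3 "'a \<times> 'a"

definition gad :: "'a graph \<Rightarrow> 'a gnode graph" where
  "gad G = \<lparr> verts = (\<Union>(u, w)\<in>edges G. {N1 u, N2 (u, w), N3 (u, w), N1 w}),
             edges = (\<Union>(u, w)\<in>edges G.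
                 {(N1 u, N2 (u, w)), (N2 (u, w), N1 u),
                  (N2 (u, w), N3 (u, w)), (N3 (u, w), N2 (u, w)),
                  (N3 (u, w), N1 w), (N1 w, N3 (u, w))}),
             lab = (\<lambda>v i. case v of N1 _ \<Rightarrow> i = 0 | N2 _ \<Rightarrow> i = 1 | N3 _ \<Rightarrow> i = 2) \<rparr>"

datatype var = X | Y
datatype upred = P1 | P2 | P3

datatype c2 =
    CEq var var
  | CE var var
  | CP upred var
  | CNot c2
  | CAnd c2 c2
  | CEx nat var c2

fun fv :: "c2 \<Rightarrow> var set" where
  "fv (CEq x y) = {x, y}"
| "fv (CE x y) = {x, y}"
| "fv (CP p x) = {x}"
| "fv (CNot f) = fv f"
| "fv (CAnd f g) = fv f \<union> fv g"
| "fv (CEx k x f) = fv f - {x}"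

fun pidx :: "upred \<Rightarrow> nat" where
  "pidx P1 = 0" | "pidx P2 = 1" | "pidx P3 = 2"

fun sat :: "'a graph \<Rightarrow> c2 \<Rightarrow> (var \<Rightarrow> 'a) \<Rightarrow> bool" where
  "sat G (CEq x y) a = (a x = a y)"
| "sat G (CE x y) a = ((a x, a y) \<in> edges G)"
| "sat G (CP p x) a = lab G (a x) (pidx p)"
| "sat G (CNot f) a = (\<not> sat G f a)"
| "sat G (CAnd f g) a = (sat G f a \<and> sat G g a)"
| "sat G (CEx k x f) a = (k \<le> card {v \<in> verts G. sat G f (a(x := v))})"

end

theory Submission
  imports Defs "HOL-Library.Countable"
begin

(* Let L be the strict linear order on 0, ..., n - 1 and F the relation obtained from L by
   reversing the single pair (a, a + 2), so that F contains the triangle a, a + 1, a + 2.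
   An isomorphism from gad F onto gad G' sends the three gadget paths of the triangle to a
   3-cycle of G', so gad F is not the gadgetisation of a strict linear order, while gad L is.

   Nevertheless a C2 formula of quantifier depth M whose counting quantifiers are bounded
   by K cannot separate N1 0 in gad L from N1 0 in gad F when a and n - a are large.
   Colour every gadget node by its kind and by the positions of its endpoints, recorded
   exactly within distance D of either end of the order and blurred to Mid in between.
   With B = K + 3, nodes whose colours agree at resolution D + B have, for every colour at
   resolution D, either equally many neighbours of that colour or at least K neighbours and
   K non-neighbours of it; as gad L and gad F also have equally many nodes of each colour,
   Duplicator wins the M-round counting game by keeping the pebbled nodes equal in colour at
   resolution (m + 1) B while m rounds remain. *)

section \<open>Counting games\<close>

fun qdepth :: "c2 \<Rightarrow> nat" where
  "qdepth (CEq x y) = 0"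
| "qdepth (CE x y) = 0"
| "qdepth (CP p x) = 0"
| "qdepth (CNot f) = qdepth f"
| "qdepth (CAnd f g) = max (qdepth f) (qdepth g)"
| "qdepth (CEx k x f) = Suc (qdepth f)"

fun count_bound :: "c2 \<Rightarrow> nat" where
  "count_bound (CEq x y) = 0"
| "count_bound (CE x y) = 0"
| "count_bound (CP p x) = 0"
| "count_bound (CNot f) = count_bound f"
| "count_bound (CAnd f g) = max (count_bound f) (count_bound g)"
| "count_bound (CEx k x f) = max k (count_bound f)"

definition atomic_match ::
    "'a graph \<Rightarrow> 'b graph \<Rightarrow> ('a \<Rightarrow> 'b \<Rightarrow> bool) \<Rightarrow> (var \<Rightarrow> 'a) \<Rightarrow> (var \<Rightarrow> 'b) \<Rightarrow> bool" where
  "atomic_match G H R a b \<longleftrightarrow> (\<forall>u. a u \<in> verts G \<and> b u \<in> verts H \<and> R (a u) (b u) \<and>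
      (\<forall>w. (a u = a w \<longleftrightarrow> b u = b w) \<and> ((a u, a w) \<in> edges G \<longleftrightarrow> (b u, b w) \<in> edges H)))"

text \<open>Duplicator's answer in the counting pebble game to a set \<open>A\<close> of at most \<open>K\<close>
  nodes, while \<open>x\<close> and \<open>x'\<close> carry the other pebble pair.\<close>

definition counting_forth ::
    "nat \<Rightarrow> 'a graph \<Rightarrow> 'b graph \<Rightarrow> ('a \<Rightarrow> 'b \<Rightarrow> bool) \<Rightarrow> ('a \<Rightarrow> 'b \<Rightarrow> bool) \<Rightarrow> bool" where
  "counting_forth K G H R R' \<longleftrightarrow> (\<forall>x x' A. R x x' \<longrightarrow> x \<in> verts G \<longrightarrow> x' \<in> verts H \<longrightarrow>
     A \<subseteq> verts G \<longrightarrow> card A \<le> K \<longrightarrow>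
     (\<exists>g. inj_on g A \<and> g ` A \<subseteq> verts H \<and> (\<forall>v\<in>A. R' v (g v) \<and> (v = x \<longleftrightarrow> g v = x') \<and>
         ((x, v) \<in> edges G \<longleftrightarrow> (x', g v) \<in> edges H))))"

definition counting_bisim ::
    "nat \<Rightarrow> nat \<Rightarrow> 'a graph \<Rightarrow> 'b graph \<Rightarrow> (nat \<Rightarrow> 'a \<Rightarrow> 'b \<Rightarrow> bool) \<Rightarrow> bool" where
  "counting_bisim K M G H R \<longleftrightarrow>
     (\<forall>m x x'. R m x x' \<longrightarrow> lab G x = lab H x') \<and>
     (\<forall>m x x'. R (Suc m) x x' \<longrightarrow> R m x x') \<and>
     (\<forall>m<M. counting_forth K G H (R (Suc m)) (R m) \<and>
            counting_forth K H G (R (Suc m))\<inverse>\<inverse> (R m)\<inverse>\<inverse>)"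

lemma atomic_match_upd:
  assumes match: "atomic_match G H R a b" and R: "\<And>v v'. R v v' \<Longrightarrow> R' v v'"
    and G: "ugraph G" and H: "ugraph H" and yx: "y \<noteq> x"
    and v: "v \<in> verts G" "v' \<in> verts H" "R' v v'"
    and eq: "v = a y \<longleftrightarrow> v' = b y"
    and edge: "(a y, v) \<in> edges G \<longleftrightarrow> (b y, v') \<in> edges H"
  shows "atomic_match G H R' (a(x := v)) (b(x := v'))"
proof -
  have irrefl: "(w, w) \<notin> edges G" "(w', w') \<notin> edges H" for w w'
    using G H by (auto simp: ugraph_def dgraph_def)
  have edge': "(v, a y) \<in> edges G \<longleftrightarrow> (v', b y) \<in> edges H"
    using edge G H by (auto simp: ugraph_def dest: symD)
  have xy: "u = x \<or> u = y" for u
    using yx by (cases u; cases x; cases y) auto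
  have ay: "a y \<in> verts G" "b y \<in> verts H" "R' (a y) (b y)"
    using match R by (auto simp: atomic_match_def)
  show ?thesis
    unfolding atomic_match_def
  proof (intro allI conjI)
    fix u w
    show "(a(x := v)) u \<in> verts G" "(b(x := v')) u \<in> verts H"
      "R' ((a(x := v)) u) ((b(x := v')) u)"
      using xy[of u] ay v yx by auto
    show "((a(x := v)) u = (a(x := v)) w) = ((b(x := v')) u = (b(x := v')) w)"
      using xy[of u] xy[of w] yx eq by auto
    show "(((a(x := v)) u, (a(x := v)) w) \<in> edges G) = (((b(x := v')) u, (b(x := v')) w) \<in> edges H)"
      using xy[of u] xy[of w] yx edge edge' irrefl by auto
  qed
qed

lemma atomic_match_conversep: "atomic_match G H R a b \<Longrightarrow> atomic_match H G R\<inverse>\<inverse> b a"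
  by (auto simp: atomic_match_def)

lemma card_sat_le_if_counting_forth:
  assumes G: "ugraph G" and H: "ugraph H"
    and forth: "counting_forth K G H R R'" and down: "\<And>v v'. R v v' \<Longrightarrow> R' v v'"
    and match: "atomic_match G H R a b" and k: "k \<le> K"
    and sat: "\<And>a' b'. atomic_match G H R' a' b' \<Longrightarrow> sat G \<phi> a' \<Longrightarrow> sat H \<phi> b'"
    and le: "k \<le> card {v \<in> verts G. sat G \<phi> (a(x := v))}"
  shows "k \<le> card {v \<in> verts H. sat H \<phi> (b(x := v))}"
proof -
  obtain y where yx: "y \<noteq> x"
    by (metis var.distinct(1))
  have y: "R (a y) (b y)" "a y \<in> verts G" "b y \<in> verts H"
    using match by (auto simp: atomic_match_def)
  obtain A where A: "A \<subseteq> {v \<in> verts G. sat G \<phi> (a(x := v))}" "card A = k"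
    using obtain_subset_with_card_n[OF le] by metis
  then have "A \<subseteq> verts G" "card A \<le> K"
    using k by auto
  then obtain g where g: "inj_on g A" "g ` A \<subseteq> verts H"
      "\<forall>v\<in>A. R' v (g v) \<and> (v = a y \<longleftrightarrow> g v = b y) \<and> ((a y, v) \<in> edges G \<longleftrightarrow> (b y, g v) \<in> edges H)"
    using forth[unfolded counting_forth_def, rule_format, OF y] by blast
  have "sat H \<phi> (b(x := g v))" if "v \<in> A" for v
  proof (rule sat)
    show "atomic_match G H R' (a(x := v)) (b(x := g v))"
      using A g that by (intro atomic_match_upd[OF match down G H yx]) auto
    show "sat G \<phi> (a(x := v))"
      using A that by auto
  qed
  then have "g ` A \<subseteq> {v \<in> verts H. sat H \<phi> (b(x := v))}"
    using g(2) by auto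
  moreover have "finite (verts H)"
    using H by (simp add: ugraph_def dgraph_def)
  ultimately show ?thesis
    using card_inj_on_le[OF g(1)] A(2) by fastforce
qed

theorem sat_eq_if_counting_bisim:
  assumes bisim: "counting_bisim K M G H R" and G: "ugraph G" and H: "ugraph H"
  shows "qdepth \<phi> \<le> m \<Longrightarrow> m \<le> M \<Longrightarrow> count_bound \<phi> \<le> K \<Longrightarrow> atomic_match G H (R m) a b \<Longrightarrow>
    sat G \<phi> a = sat H \<phi> b"
proof (induction \<phi> arbitrary: m a b)
  case (CEq u w)
  then show ?case
    by (simp add: atomic_match_def)
next
  case (CE u w)
  then show ?case
    by (simp add: atomic_match_def)
next
  case (CP p u)
  have "R m (a u) (b u)"
    using CP.prems(4) by (simp add: atomic_match_def)
  then show ?case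
    using bisim by (simp add: counting_bisim_def)
next
  case (CNot f)
  then show ?case
    by simp
next
  case (CAnd f g)
  then show ?case
    using CAnd.IH(1)[of m a b] CAnd.IH(2)[of m a b] by simp
next
  case (CEx k x f)
  obtain m' where m: "m = Suc m'"
    using CEx.prems(1) by (cases m) auto
  have forth: "counting_forth K G H (R (Suc m')) (R m')"
    and backward: "counting_forth K H G (R (Suc m'))\<inverse>\<inverse> (R m')\<inverse>\<inverse>"
    and down: "\<And>v v'. R (Suc m') v v' \<Longrightarrow> R m' v v'"
    using bisim CEx.prems(2) m by (auto simp: counting_bisim_def)
  have match: "atomic_match G H (R (Suc m')) a b" and k: "k \<le> K"
    and IH: "\<And>a' b'. atomic_match G H (R m') a' b' \<Longrightarrow> sat G f a' = sat H f b'"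
    using CEx m by simp_all
  have "k \<le> card {v \<in> verts G. sat G f (a(x := v))} \<longleftrightarrow> k \<le> card {v \<in> verts H. sat H f (b(x := v))}"
  proof
    assume le: "k \<le> card {v \<in> verts G. sat G f (a(x := v))}"
    show "k \<le> card {v \<in> verts H. sat H f (b(x := v))}"
    proof (rule card_sat_le_if_counting_forth[OF G H forth down match k _ le])
      fix a' b'
      assume "atomic_match G H (R m') a' b'" "sat G f a'"
      then show "sat H f b'"
        using IH by simp
    qed
  next
    assume le: "k \<le> card {v \<in> verts H. sat H f (b(x := v))}"
    show "k \<le> card {v \<in> verts G. sat G f (a(x := v))}"
    proof (rule card_sat_le_if_counting_forth[OF H G backward _ atomic_match_conversep[OF match] k _ le])
      fix a' b'
      assume "atomic_match H G (R m')\<inverse>\<inverse> a' b'" "sat H f a'"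
      then show "sat G f b'"
        using IH atomic_match_conversep[of H G "(R m')\<inverse>\<inverse>" a' b'] by simp
    qed (use down in simp)
  qed
  then show ?case
    by simp
qed

section \<open>Invariance under isomorphism\<close>

definition iso_map :: "nat \<Rightarrow> ('a \<Rightarrow> 'b) \<Rightarrow> 'a graph \<Rightarrow> 'b graph \<Rightarrow> bool" where
  "iso_map d f G H \<longleftrightarrow> bij_betw f (verts G) (verts H) \<and>
     (\<forall>u\<in>verts G. \<forall>w\<in>verts G. (u, w) \<in> edges G \<longleftrightarrow> (f u, f w) \<in> edges H) \<and>
     (\<forall>v\<in>verts G. \<forall>i<d. lab G v i = lab H (f v) i)"

lemma graph_iso_iff_iso_map: "graph_iso d G H \<longleftrightarrow> (\<exists>f. iso_map d f G H)"
  by (simp add: graph_iso_def iso_map_def)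

lemma iso_mapD:
  assumes "iso_map d f G H"
  shows iso_map_bij: "bij_betw f (verts G) (verts H)"
    and iso_map_edge: "u \<in> verts G \<Longrightarrow> w \<in> verts G \<Longrightarrow> (f u, f w) \<in> edges H \<longleftrightarrow> (u, w) \<in> edges G"
    and iso_map_lab: "v \<in> verts G \<Longrightarrow> i < d \<Longrightarrow> lab H (f v) i = lab G v i"
  using assms by (simp_all add: iso_map_def)

lemma iso_map_inv_into:
  assumes iso: "iso_map d f G H"
  shows "iso_map d (inv_into (verts G) f) H G"
proof -
  let ?g = "inv_into (verts G) f"
  have bij: "bij_betw f (verts G) (verts H)"
    by (rule iso_map_bij[OF iso])
  have g: "?g w \<in> verts G" "f (?g w) = w" if "w \<in> verts H" for w
    using bij that by (auto simp: bij_betw_def intro: inv_into_into f_inv_into_f)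
  show ?thesis
    unfolding iso_map_def
  proof (intro conjI ballI allI impI)
    show "bij_betw ?g (verts H) (verts G)"
      by (rule bij_betw_inv_into[OF bij])
  next
    fix u w
    assume "u \<in> verts H" "w \<in> verts H"
    then show "(u, w) \<in> edges H \<longleftrightarrow> (?g u, ?g w) \<in> edges G"
      using iso_map_edge[OF iso, of "?g u" "?g w"] g by simp
  next
    fix v i
    assume "v \<in> verts H" "i < d"
    then show "lab H v i = lab G (?g v) i"
      using iso_map_lab[OF iso, of "?g v" i] g by simp
  qed
qed

lemma iso_map_comp:
  assumes f: "iso_map d f G H" and g: "iso_map d g H L"
  shows "iso_map d (g \<circ> f) G L"
proof -
  have fv: "f v \<in> verts H" if "v \<in> verts G" for v
    using iso_map_bij[OF f] that by (rule bij_betw_apply)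
  show ?thesis
    unfolding iso_map_def
  proof (intro conjI ballI allI impI)
    show "bij_betw (g \<circ> f) (verts G) (verts L)"
      using iso_map_bij[OF f] iso_map_bij[OF g] by (rule bij_betw_trans)
  next
    fix u w
    assume "u \<in> verts G" "w \<in> verts G"
    then show "(u, w) \<in> edges G \<longleftrightarrow> ((g \<circ> f) u, (g \<circ> f) w) \<in> edges L"
      using iso_map_edge[OF f] iso_map_edge[OF g] fv by simp
  next
    fix v i
    assume "v \<in> verts G" "i < d"
    then show "lab G v i = lab L ((g \<circ> f) v) i"
      using iso_map_lab[OF f] iso_map_lab[OF g] fv by simp
  qed
qed

theorem sat_iso_map:
  assumes iso: "iso_map 3 f G H" and a: "\<forall>u. a u \<in> verts G"
  shows "sat G \<phi> a = sat H \<phi> (\<lambda>u. f (a u))"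
  using a
proof (induction \<phi> arbitrary: a)
  case (CEq u w)
  have "inj_on f (verts G)"
    using iso_map_bij[OF iso] by (rule bij_betw_imp_inj_on)
  then show ?case
    using CEq by (simp add: inj_on_eq_iff)
next
  case (CE u w)
  then show ?case
    using iso_map_edge[OF iso] by simp
next
  case (CP p u)
  have "pidx p < 3"
    by (cases p) simp_all
  then show ?case
    using iso_map_lab[OF iso] CP by simp
next
  case (CEx k x \<phi>)
  have bij: "bij_betw f (verts G) (verts H)"
    by (rule iso_map_bij[OF iso])
  have step: "sat G \<phi> (a(x := v)) = sat H \<phi> ((\<lambda>u. f (a u))(x := f v))" if "v \<in> verts G" for v
  proof -
    have "\<forall>u. (a(x := v)) u \<in> verts G"
      using CEx.prems that by simp
    then have "sat G \<phi> (a(x := v)) = sat H \<phi> (\<lambda>u. f ((a(x := v)) u))"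
      by (rule CEx.IH)
    also have "(\<lambda>u. f ((a(x := v)) u)) = (\<lambda>u. f (a u))(x := f v)"
      by (simp add: fun_eq_iff)
    finally show ?thesis .
  qed
  have "verts H = f ` verts G"
    using bij by (simp add: bij_betw_def)
  then have "{w \<in> verts H. sat H \<phi> ((\<lambda>u. f (a u))(x := w))} = f ` {v \<in> verts G. sat G \<phi> (a(x := v))}"
    using step by auto
  moreover have "inj_on f {v \<in> verts G. sat G \<phi> (a(x := v))}"
    using bij by (auto simp: bij_betw_def intro: inj_on_subset)
  ultimately show ?case
    by (simp add: card_image)
qed simp_all

definition graph_image :: "('a \<Rightarrow> 'b) \<Rightarrow> 'a graph \<Rightarrow> 'b graph" where
  "graph_image f G = \<lparr>verts = f ` verts G, edges = map_prod f f ` edges G,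
      lab = (\<lambda>v. lab G (inv_into (verts G) f v))\<rparr>"

lemma graph_image_simps [simp]:
  "verts (graph_image f G) = f ` verts G"
  "edges (graph_image f G) = map_prod f f ` edges G"
  "lab (graph_image f G) = (\<lambda>v. lab G (inv_into (verts G) f v))"
  by (simp_all add: graph_image_def)

lemma edge_graph_image_iff:
  assumes inj: "inj_on f (verts G)" and sub: "edges G \<subseteq> verts G \<times> verts G"
    and uw: "u \<in> verts G" "w \<in> verts G"
  shows "(f u, f w) \<in> edges (graph_image f G) \<longleftrightarrow> (u, w) \<in> edges G"
proof
  assume "(f u, f w) \<in> edges (graph_image f G)"
  then obtain u' w' where e: "(u', w') \<in> edges G" "f u' = f u" "f w' = f w"
    by auto
  then have "u' = u" "w' = w"
    using sub uw inj_onD[OF inj] by blast+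
  then show "(u, w) \<in> edges G"
    using e(1) by simp
qed (simp add: rev_image_eqI)

lemma iso_map_graph_image:
  assumes inj: "inj_on f (verts G)" and sub: "edges G \<subseteq> verts G \<times> verts G"
  shows "iso_map d f G (graph_image f G)"
  unfolding iso_map_def
proof (intro conjI ballI allI impI)
  show "bij_betw f (verts G) (verts (graph_image f G))"
    using inj by (simp add: inj_on_imp_bij_betw)
  show "(u, w) \<in> edges G \<longleftrightarrow> (f u, f w) \<in> edges (graph_image f G)"
    if "u \<in> verts G" "w \<in> verts G" for u w
    using edge_graph_image_iff[OF inj sub that] by simp
  show "lab G v i = lab (graph_image f G) (f v) i" if "v \<in> verts G" for v i
    using inj that by simp
qed

lemma ugraph_graph_image:
  assumes inj: "inj_on f (verts G)" and G: "ugraph G"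
  shows "ugraph (graph_image f G)"
proof -
  have sub: "edges G \<subseteq> verts G \<times> verts G" and irrefl: "(v, v) \<notin> edges G"
    and fin: "finite (verts G)" and sym: "sym (edges G)" for v
    using G by (auto simp: ugraph_def dgraph_def)
  have "(w, w) \<notin> edges (graph_image f G)" for w
  proof
    assume "(w, w) \<in> edges (graph_image f G)"
    then obtain u v where e: "(u, v) \<in> edges G" "f u = w" "f v = w"
      by auto
    then have "u = v"
      using sub inj_onD[OF inj] by blast
    then show False
      using e(1) irrefl by simp
  qed
  moreover have "sym (edges (graph_image f G))"
    using sym by (auto simp: sym_def)
  moreover have "edges (graph_image f G) \<subseteq> verts (graph_image f G) \<times> verts (graph_image f G)"
    using sub by auto
  ultimately show ?thesis
    using fin by (simp add: ugraph_def dgraph_def)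
qed

section \<open>Duplicator strategies from capped colour-class counts\<close>

definition rel_pos :: "'a graph \<Rightarrow> 'a \<Rightarrow> 'a \<Rightarrow> nat" where
  "rel_pos G x v = (if v = x then 0 else if (x, v) \<in> edges G then 1 else 2)"

definition pos_class :: "'a graph \<Rightarrow> ('a \<Rightarrow> 'c) \<Rightarrow> 'a \<Rightarrow> 'c \<Rightarrow> nat \<Rightarrow> 'a set" where
  "pos_class G c x t r = {v \<in> verts G. c v = t \<and> rel_pos G x v = r}"

lemma rel_pos_eq_imp_atomic_eq:
  assumes "(x, x) \<notin> edges G" "(x', x') \<notin> edges H" "rel_pos H x' w = rel_pos G x v"
  shows "(v = x \<longleftrightarrow> w = x') \<and> ((x, v) \<in> edges G \<longleftrightarrow> (x', w) \<in> edges H)"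
  using assms by (auto simp: rel_pos_def split: if_splits)

lemma exists_inj_on_fibres:
  assumes A: "finite A" and B: "finite B"
    and le: "\<And>z. card {v \<in> A. c v = z} \<le> card {w \<in> B. d w = z}"
  obtains g where "inj_on g A" "g ` A \<subseteq> B" "\<And>v. v \<in> A \<Longrightarrow> d (g v) = c v"
proof -
  have "\<exists>h. h ` {v \<in> A. c v = z} \<subseteq> {w \<in> B. d w = z} \<and> inj_on h {v \<in> A. c v = z}" for z
    using A B le by (intro card_le_inj) simp_all
  then obtain h where h: "\<forall>z. h z ` {v \<in> A. c v = z} \<subseteq> {w \<in> B. d w = z} \<and> inj_on (h z) {v \<in> A. c v = z}"
    using choice[of "\<lambda>z h. h ` {v \<in> A. c v = z} \<subseteq> {w \<in> B. d w = z} \<and> inj_on h {v \<in> A. c v = z}"]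
    by blast
  define g where "g v = h (c v) v" for v
  have g: "g v \<in> B" "d (g v) = c v" if "v \<in> A" for v
    using h that unfolding g_def by blast+
  have "inj_on g A"
  proof (rule inj_onI)
    fix v w
    assume vw: "v \<in> A" "w \<in> A" "g v = g w"
    then have "c v = c w"
      using g by metis
    then show "v = w"
      using vw h unfolding g_def by (auto dest: inj_onD)
  qed
  then show thesis
    using that g by blast
qed

lemma counting_forth_if_capped_class_counts:
  assumes G: "ugraph G" and H: "ugraph H"
    and counts: "\<And>x x'. R x x' \<Longrightarrow> x \<in> verts G \<Longrightarrow> x' \<in> verts H \<Longrightarrow>
      \<forall>t r. min K (card (pos_class G c x t r)) = min K (card (pos_class H c' x' t r))"
    and R': "\<And>v v'. v \<in> verts G \<Longrightarrow> v' \<in> verts H \<Longrightarrow> c' v' = c v \<Longrightarrow> R' v v'"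
  shows "counting_forth K G H R R'"
  unfolding counting_forth_def
proof (intro allI impI)
  fix x x' A
  assume x: "R x x'" "x \<in> verts G" "x' \<in> verts H" and A: "A \<subseteq> verts G" "card A \<le> K"
  have finG: "finite (verts G)" and finH: "finite (verts H)"
    and irrefl: "(x, x) \<notin> edges G" "(x', x') \<notin> edges H"
    using G H by (auto simp: ugraph_def dgraph_def)
  have finA: "finite A"
    using A(1) finG by (rule finite_subset)
  have fibre_le: "card {v \<in> A. (c v, rel_pos G x v) = z} \<le> card {w \<in> verts H. (c' w, rel_pos H x' w) = z}" for z
  proof (cases z)
    case (Pair t r)
    have "card {v \<in> A. (c v, rel_pos G x v) = z} \<le> card A"
      using finA by (intro card_mono) auto
    moreover have "card {v \<in> A. (c v, rel_pos G x v) = z} \<le> card (pos_class G c x t r)"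
      using A(1) finG Pair by (intro card_mono) (auto simp: pos_class_def)
    ultimately have "card {v \<in> A. (c v, rel_pos G x v) = z} \<le> min K (card (pos_class G c x t r))"
      using A(2) by simp
    also have "\<dots> = min K (card (pos_class H c' x' t r))"
      using counts[OF x] by blast
    also have "\<dots> \<le> card {w \<in> verts H. (c' w, rel_pos H x' w) = z}"
      using Pair by (simp add: pos_class_def)
    finally show ?thesis .
  qed
  obtain g where g: "inj_on g A" "g ` A \<subseteq> verts H"
      "\<And>v. v \<in> A \<Longrightarrow> (c' (g v), rel_pos H x' (g v)) = (c v, rel_pos G x v)"
    using exists_inj_on_fibres[OF finA finH fibre_le] by blast
  have "R' v (g v) \<and> (v = x \<longleftrightarrow> g v = x') \<and> ((x, v) \<in> edges G \<longleftrightarrow> (x', g v) \<in> edges H)"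
    if v: "v \<in> A" for v
  proof -
    have "v \<in> verts G" "g v \<in> verts H"
      using A(1) g(2) v by auto
    moreover have "c' (g v) = c v" "rel_pos H x' (g v) = rel_pos G x v"
      using g(3)[OF v] by simp_all
    ultimately show ?thesis
      using R' rel_pos_eq_imp_atomic_eq[OF irrefl] by blast
  qed
  then show "\<exists>g. inj_on g A \<and> g ` A \<subseteq> verts H \<and> (\<forall>v\<in>A. R' v (g v) \<and> (v = x \<longleftrightarrow> g v = x') \<and>
      ((x, v) \<in> edges G \<longleftrightarrow> (x', g v) \<in> edges H))"
    using g(1,2) by blast
qed

lemma pos_class_0:
  "x \<in> verts G \<Longrightarrow> pos_class G c x t 0 = (if c x = t then {x} else {})"
  by (auto simp: pos_class_def rel_pos_def)

lemma pos_class_1: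
  "ugraph G \<Longrightarrow> pos_class G c x t 1 = {v. (x, v) \<in> edges G \<and> c v = t}"
  by (auto simp: pos_class_def rel_pos_def ugraph_def dgraph_def)

lemma pos_class_gt_2: "2 < r \<Longrightarrow> pos_class G c x t r = {}"
  by (auto simp: pos_class_def rel_pos_def)

lemma card_colour_class_split:
  assumes "finite (verts G)"
  shows "card {v \<in> verts G. c v = t} =
    card (pos_class G c x t 0) + card (pos_class G c x t 1) + card (pos_class G c x t 2)"
proof -
  have fin: "finite (pos_class G c x t r)" for r
    using assms by (simp add: pos_class_def)
  have "{v \<in> verts G. c v = t} = (pos_class G c x t 0 \<union> pos_class G c x t 1) \<union> pos_class G c x t 2"
    by (auto simp: pos_class_def rel_pos_def)
  also have "card \<dots> = card (pos_class G c x t 0 \<union> pos_class G c x t 1) + card (pos_class G c x t 2)"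
    using fin by (intro card_Un_disjoint) (auto simp: pos_class_def)
  also have "card (pos_class G c x t 0 \<union> pos_class G c x t 1) =
      card (pos_class G c x t 0) + card (pos_class G c x t 1)"
    using fin by (intro card_Un_disjoint) (auto simp: pos_class_def)
  finally show ?thesis .
qed

definition nbr_counts_agree ::
    "nat \<Rightarrow> 'a graph \<Rightarrow> 'b graph \<Rightarrow> ('a \<Rightarrow> 'c) \<Rightarrow> ('b \<Rightarrow> 'c) \<Rightarrow> 'a \<Rightarrow> 'b \<Rightarrow> bool" where
  "nbr_counts_agree K G H c c' x x' \<longleftrightarrow> (\<forall>t.
     card (pos_class G c x t 1) = card (pos_class H c' x' t 1) \<or>
     (K \<le> card (pos_class G c x t 1) \<and> K \<le> card (pos_class H c' x' t 1) \<and>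
      K \<le> card (pos_class G c x t 2) \<and> K \<le> card (pos_class H c' x' t 2)))"

lemma capped_class_counts_if_nbr_counts_agree:
  assumes fin: "finite (verts G)" "finite (verts H)" and x: "x \<in> verts G" "x' \<in> verts H"
    and cx: "c x = c' x'"
    and total: "\<And>t. card {v \<in> verts G. c v = t} = card {v \<in> verts H. c' v = t}"
    and nbr: "nbr_counts_agree K G H c c' x x'"
  shows "\<forall>t r. min K (card (pos_class G c x t r)) = min K (card (pos_class H c' x' t r))"
proof (intro allI)
  fix t and r :: nat
  have c0: "card (pos_class G c x t 0) = card (pos_class H c' x' t 0)"
    using x cx by (simp add: pos_class_0)
  have c1: "card (pos_class G c x t 1) = card (pos_class H c' x' t 1) \<or>
      (K \<le> card (pos_class G c x t 1) \<and> K \<le> card (pos_class H c' x' t 1) \<and>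
       K \<le> card (pos_class G c x t 2) \<and> K \<le> card (pos_class H c' x' t 2))"
    using nbr by (simp add: nbr_counts_agree_def)
  have sum: "card (pos_class G c x t 0) + card (pos_class G c x t 1) + card (pos_class G c x t 2) =
      card (pos_class H c' x' t 0) + card (pos_class H c' x' t 1) + card (pos_class H c' x' t 2)"
    using total[of t] card_colour_class_split[OF fin(1), of c t x]
      card_colour_class_split[OF fin(2), of c' t x'] by simp
  consider "r = 0" | "r = 1" | "r = 2" | "2 < r"
    by linarith
  then show "min K (card (pos_class G c x t r)) = min K (card (pos_class H c' x' t r))"
    using c0 c1 sum by cases (auto simp: min_def pos_class_gt_2)
qed

section \<open>Gadgetisation\<close>

lemma gad_lab [simp]: "lab (gad G) v i = (case v of N1 _ \<Rightarrow> i = 0 | N2 _ \<Rightarrow> i = 1 | N3 _ \<Rightarrow> i = 2)"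
  by (simp add: gad_def)

lemma gad_verts [simp]:
  "N1 u \<in> verts (gad G) \<longleftrightarrow> (\<exists>w. (u, w) \<in> edges G \<or> (w, u) \<in> edges G)"
  "N2 e \<in> verts (gad G) \<longleftrightarrow> e \<in> edges G"
  "N3 e \<in> verts (gad G) \<longleftrightarrow> e \<in> edges G"
  by (auto simp: gad_def)

lemma gad_edges [simp]:
  "(N1 u, N1 u') \<notin> edges (gad G)"
  "(N2 e, N2 e') \<notin> edges (gad G)"
  "(N3 e, N3 e') \<notin> edges (gad G)"
  "(N1 u, N2 e) \<in> edges (gad G) \<longleftrightarrow> e \<in> edges G \<and> fst e = u"
  "(N2 e, N1 u) \<in> edges (gad G) \<longleftrightarrow> e \<in> edges G \<and> fst e = u"
  "(N2 e, N3 e') \<in> edges (gad G) \<longleftrightarrow> e \<in> edges G \<and> e' = e"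
  "(N3 e', N2 e) \<in> edges (gad G) \<longleftrightarrow> e \<in> edges G \<and> e' = e"
  "(N3 e, N1 u) \<in> edges (gad G) \<longleftrightarrow> e \<in> edges G \<and> snd e = u"
  "(N1 u, N3 e) \<in> edges (gad G) \<longleftrightarrow> e \<in> edges G \<and> snd e = u"
  by (auto simp: gad_def intro!: bexI[of _ e])

lemma gad_ugraph:
  assumes "finite (edges G)"
  shows "ugraph (gad G)"
proof -
  have "finite (verts (gad G))"
    using assms by (auto simp: gad_def)
  moreover have "edges (gad G) \<subseteq> verts (gad G) \<times> verts (gad G)"
    by (auto simp: gad_def)
  moreover have "(v, v) \<notin> edges (gad G)" for v
    by (cases v) simp_all
  moreover have "sym (edges (gad G))"
    by (auto simp: gad_def sym_def)
  ultimately show ?thesis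
    by (simp add: ugraph_def dgraph_def)
qed

lemma set_gnode_gad_verts: "v \<in> verts (gad G) \<Longrightarrow> set_gnode v \<subseteq> Field (edges G)"
  by (cases v) (auto intro: FieldI1 FieldI2)

lemma gad_nbrs_N1:
  "{v. (N1 i, v) \<in> edges (gad G) \<and> P v} =
     (\<lambda>j. N2 (i, j)) ` {j. (i, j) \<in> edges G \<and> P (N2 (i, j))} \<union>
     (\<lambda>j. N3 (j, i)) ` {j. (j, i) \<in> edges G \<and> P (N3 (j, i))}"
proof -
  have "(N1 i, v) \<in> edges (gad G) \<and> P v \<longleftrightarrow>
      v \<in> (\<lambda>j. N2 (i, j)) ` {j. (i, j) \<in> edges G \<and> P (N2 (i, j))} \<union>
        (\<lambda>j. N3 (j, i)) ` {j. (j, i) \<in> edges G \<and> P (N3 (j, i))}" for v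
    by (cases v) auto
  then show ?thesis
    by blast
qed

lemma card_gad_nbrs_N1:
  assumes "finite (edges G)"
  shows "card {v. (N1 i, v) \<in> edges (gad G) \<and> P v} =
    card {j. (i, j) \<in> edges G \<and> P (N2 (i, j))} + card {j. (j, i) \<in> edges G \<and> P (N3 (j, i))}"
proof -
  have "finite {j. (i, j) \<in> edges G \<and> P (N2 (i, j))}"
    by (rule finite_subset[of _ "snd ` edges G"]) (use assms in force)+
  moreover have "finite {j. (j, i) \<in> edges G \<and> P (N3 (j, i))}"
    by (rule finite_subset[of _ "fst ` edges G"]) (use assms in force)+
  ultimately show ?thesis
    unfolding gad_nbrs_N1 by (subst card_Un_disjoint) (auto simp: card_image inj_on_def)
qed

lemma gad_nbrs_N2:
  assumes "e \<in> edges G"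
  shows "{v. (N2 e, v) \<in> edges (gad G) \<and> P v} = {v \<in> {N1 (fst e), N3 e}. P v}"
proof -
  have "(N2 e, v) \<in> edges (gad G) \<longleftrightarrow> v \<in> {N1 (fst e), N3 e}" for v
    using assms by (cases v) auto
  then show ?thesis
    by blast
qed

lemma gad_nbrs_N3:
  assumes "e \<in> edges G"
  shows "{v. (N3 e, v) \<in> edges (gad G) \<and> P v} = {v \<in> {N2 e, N1 (snd e)}. P v}"
proof -
  have "(N3 e, v) \<in> edges (gad G) \<longleftrightarrow> v \<in> {N2 e, N1 (snd e)}" for v
    using assms by (cases v) auto
  then show ?thesis
    by blast
qed

lemma gad_iso_map_edge:
  assumes iso: "iso_map 3 f (gad G) (gad G')" and e: "(u, w) \<in> edges G"
  obtains u' w' where "f (N1 u) = N1 u'" "f (N1 w) = N1 w'" "(u', w') \<in> edges G'"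
proof -
  have verts: "N1 u \<in> verts (gad G)" "N2 (u, w) \<in> verts (gad G)" "N3 (u, w) \<in> verts (gad G)"
      "N1 w \<in> verts (gad G)"
    using e by auto
  have labs: "lab (gad G') (f (N1 u)) 0" "lab (gad G') (f (N2 (u, w))) 1"
      "lab (gad G') (f (N3 (u, w))) 2" "lab (gad G') (f (N1 w)) 0"
    using iso_map_lab[OF iso] verts by simp_all
  obtain u' where u': "f (N1 u) = N1 u'"
    using labs(1) by (cases "f (N1 u)") simp_all
  obtain e2 where e2: "f (N2 (u, w)) = N2 e2"
    using labs(2) by (cases "f (N2 (u, w))") simp_all
  obtain e3 where e3: "f (N3 (u, w)) = N3 e3"
    using labs(3) by (cases "f (N3 (u, w))") simp_all
  obtain w' where w': "f (N1 w) = N1 w'"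
    using labs(4) by (cases "f (N1 w)") simp_all
  have "(N1 u', N2 e2) \<in> edges (gad G')" "(N2 e2, N3 e3) \<in> edges (gad G')"
      "(N3 e3, N1 w') \<in> edges (gad G')"
    using iso_map_edge[OF iso verts(1,2)] iso_map_edge[OF iso verts(2,3)]
      iso_map_edge[OF iso verts(3,4)] e u' e2 e3 w' by simp_all
  then have "e2 \<in> edges G'" "e2 = (u', w')"
    by auto
  then show thesis
    using that u' w' by simp
qed

lemma gad_iso_map_triangle:
  assumes iso: "iso_map 3 f (gad G) (gad G')" and trans: "trans (edges G')"
    and triangle: "(a, b) \<in> edges G" "(b, c) \<in> edges G" "(c, a) \<in> edges G"
  shows "\<exists>v. (v, v) \<in> edges G'"
proof -
  obtain a' b' where ab: "f (N1 a) = N1 a'" "f (N1 b) = N1 b'" "(a', b') \<in> edges G'"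
    using gad_iso_map_edge[OF iso triangle(1)] .
  obtain b'' c' where bc: "f (N1 b) = N1 b''" "f (N1 c) = N1 c'" "(b'', c') \<in> edges G'"
    using gad_iso_map_edge[OF iso triangle(2)] .
  obtain c'' a'' where ca: "f (N1 c) = N1 c''" "f (N1 a) = N1 a''" "(c'', a'') \<in> edges G'"
    using gad_iso_map_edge[OF iso triangle(3)] .
  have "(a', b') \<in> edges G'" "(b', c') \<in> edges G'" "(c', a') \<in> edges G'"
    using ab bc ca by auto
  then have "(a', a') \<in> edges G'"
    using trans by (meson transD)
  then show ?thesis ..
qed

section \<open>A linear order and its flipped copy\<close>

definition lin :: "nat \<Rightarrow> (nat \<times> nat) set" where
  "lin n = {(i, j). i < j \<and> j < n}"

definition lin_flip :: "nat \<Rightarrow> nat \<Rightarrow> (nat \<times> nat) set" where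
  "lin_flip n a = insert (a + 2, a) (lin n - {(a, a + 2)})"

definition rel_graph :: "nat \<Rightarrow> (nat \<times> nat) set \<Rightarrow> nat graph" where
  "rel_graph n T = \<lparr>verts = {..<n}, edges = T, lab = (\<lambda>_ _. False)\<rparr>"

abbreviation gad_rel :: "nat \<Rightarrow> (nat \<times> nat) set \<Rightarrow> nat gnode graph" where
  "gad_rel n T \<equiv> gad (rel_graph n T)"

lemma rel_graph_simps [simp]: "verts (rel_graph n T) = {..<n}" "edges (rel_graph n T) = T"
  by (simp_all add: rel_graph_def)

lemma dgraph_rel_graph_lin: "dgraph (rel_graph n (lin n))"
  by (auto simp: dgraph_def lin_def)

lemma strict_linear_order_on_lin: "strict_linear_order_on {..<n} (lin n)"
  by (auto simp: strict_linear_order_on_def lin_def trans_def irrefl_def total_on_def)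

lemma lin_flip_triangle:
  assumes "a + 2 < n"
  shows "(a, a + 1) \<in> lin_flip n a" "(a + 1, a + 2) \<in> lin_flip n a" "(a + 2, a) \<in> lin_flip n a"
  using assms by (auto simp: lin_flip_def lin_def)

lemma lin_or_flip_subset:
  "T \<in> {lin n, lin_flip n a} \<Longrightarrow> a + 2 < n \<Longrightarrow> T \<subseteq> {..<n} \<times> {..<n}"
  by (auto simp: lin_flip_def lin_def)

lemma lin_or_flip_memI:
  "T \<in> {lin n, lin_flip n a} \<Longrightarrow> i < j \<Longrightarrow> j < n \<Longrightarrow> (i, j) \<noteq> (a, a + 2) \<Longrightarrow> (i, j) \<in> T"
  by (auto simp: lin_flip_def lin_def)

lemma lin_or_flip_memD:
  "T \<in> {lin n, lin_flip n a} \<Longrightarrow> (i, j) \<in> T \<Longrightarrow> i < j \<or> (i, j) = (a + 2, a)"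
  by (auto simp: lin_flip_def lin_def)

lemma finite_lin_or_flip:
  assumes "T \<in> {lin n, lin_flip n a}" "a + 2 < n"
  shows "finite T"
  by (rule finite_subset[OF lin_or_flip_subset[OF assms]]) simp

lemma ugraph_gad_rel_lin_or_flip:
  "T \<in> {lin n, lin_flip n a} \<Longrightarrow> a + 2 < n \<Longrightarrow> ugraph (gad_rel n T)"
  by (rule gad_ugraph) (simp add: finite_lin_or_flip)

lemma set_gnode_gad_rel_lin_or_flip:
  assumes "T \<in> {lin n, lin_flip n a}" "a + 2 < n" "v \<in> verts (gad_rel n T)"
  shows "set_gnode v \<subseteq> {..<n}"
  using set_gnode_gad_verts[OF assms(3)] lin_or_flip_subset[OF assms(1,2)] by (auto simp: Field_def)

lemma N1_in_gad_rel_lin_or_flip_iff: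
  assumes T: "T \<in> {lin n, lin_flip n a}" and a: "0 < a" "a + 3 < n"
  shows "N1 i \<in> verts (gad_rel n T) \<longleftrightarrow> i < n"
proof
  assume "N1 i \<in> verts (gad_rel n T)"
  then show "i < n"
    using lin_or_flip_subset[OF T] a by auto
next
  assume i: "i < n"
  show "N1 i \<in> verts (gad_rel n T)"
  proof (cases "i < n - 1")
    case True
    then have "(i, n - 1) \<in> T"
      using a by (intro lin_or_flip_memI[OF T]) auto
    then show ?thesis
      by auto
  next
    case False
    then have "(0, i) \<in> T"
      using a i by (intro lin_or_flip_memI[OF T]) auto
    then show ?thesis
      by auto
  qed
qed

datatype zone = Lo nat | Hi nat | Mid

definition zone_of :: "nat \<Rightarrow> nat \<Rightarrow> nat \<Rightarrow> zone" where
  "zone_of n D i = (if i < D then Lo i else if n \<le> i + D then Hi (n - 1 - i) else Mid)"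

lemma zone_of_eq_Mid_iff: "zone_of n D i = Mid \<longleftrightarrow> D \<le> i \<and> i + D < n"
  by (auto simp: zone_of_def)

(* Hi (n - 1 - i) truncates to Hi 0 for every i \<ge> n - 1, so positions are only
   recovered from zones for i < n. *)
lemma zone_of_eq_imp_eq:
  "i < n \<Longrightarrow> j < n \<Longrightarrow> zone_of n D i = zone_of n D j \<Longrightarrow> zone_of n D i \<noteq> Mid \<Longrightarrow> i = j"
  by (auto simp: zone_of_def split: if_splits)

lemma zone_of_coarsen:
  assumes "i < n" "j < n" "D \<le> D'" "zone_of n D' i = zone_of n D' j"
  shows "zone_of n D i = zone_of n D j"
proof (cases "zone_of n D' i = Mid")
  case True
  then show ?thesis
    using assms by (auto simp: zone_of_def split: if_splits)
next
  case False
  then show ?thesis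
    using zone_of_eq_imp_eq assms by metis
qed

definition colour :: "nat \<Rightarrow> nat \<Rightarrow> nat gnode \<Rightarrow> zone gnode" where
  "colour n D = map_gnode (zone_of n D)"

lemma colour_simps [simp]:
  "colour n D (N1 i) = N1 (zone_of n D i)"
  "colour n D (N2 e) = N2 (zone_of n D (fst e), zone_of n D (snd e))"
  "colour n D (N3 e) = N3 (zone_of n D (fst e), zone_of n D (snd e))"
  by (cases e; simp add: colour_def)+

lemma set_gnode_edge_node [simp]:
  "set_gnode (N2 e) = {fst e, snd e}" "set_gnode (N3 e) = {fst e, snd e}"
  by (cases e; simp add: insert_commute)+

lemma colour_coarsen:
  assumes D: "D \<le> D'" and x: "set_gnode x \<subseteq> {..<n}" and y: "set_gnode y \<subseteq> {..<n}"
    and eq: "colour n D' x = colour n D' y"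
  shows "colour n D x = colour n D y"
proof -
  have z: "zone_of n D i = zone_of n D j"
    if "i \<in> set_gnode x" "j \<in> set_gnode y" "zone_of n D' i = zone_of n D' j" for i j
    using x y that by (intro zone_of_coarsen[OF _ _ D]) auto
  show ?thesis
    using eq by (cases x; cases y) (auto intro!: z)
qed

lemma colour_coarsen_lin_flip:
  assumes "a + 2 < n" "x \<in> verts (gad_rel n (lin n))" "x' \<in> verts (gad_rel n (lin_flip n a))"
    and "colour n D' x = colour n D' x'" "D \<le> D'"
  shows "colour n D x = colour n D x'"
proof (rule colour_coarsen[OF assms(5) _ _ assms(4)])
  show "set_gnode x \<subseteq> {..<n}"
    by (rule set_gnode_gad_rel_lin_or_flip[OF _ assms(1,2)]) simp
  show "set_gnode x' \<subseteq> {..<n}"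
    by (rule set_gnode_gad_rel_lin_or_flip[OF _ assms(1,3)]) simp
qed

lemma colour_eq_imp_lab_eq: "colour n D x = colour n D y \<Longrightarrow> lab (gad G) x = lab (gad H) y"
  by (cases x; cases y) (auto simp: fun_eq_iff)

definition flip_pair :: "nat \<Rightarrow> nat \<times> nat \<Rightarrow> nat \<times> nat" where
  "flip_pair a e = (if e = (a, a + 2) then (a + 2, a) else if e = (a + 2, a) then (a, a + 2) else e)"

primrec flip_node :: "nat \<Rightarrow> nat gnode \<Rightarrow> nat gnode" where
  "flip_node a (N1 i) = N1 i"
| "flip_node a (N2 e) = N2 (flip_pair a e)"
| "flip_node a (N3 e) = N3 (flip_pair a e)"

lemma flip_node_flip_node [simp]: "flip_node a (flip_node a v) = v"
  by (cases v) (auto simp: flip_pair_def)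

lemma flip_node_in_verts_iff:
  assumes a: "0 < a" "a + 3 < n"
  shows "flip_node a v \<in> verts (gad_rel n (lin n)) \<longleftrightarrow> v \<in> verts (gad_rel n (lin_flip n a))"
proof (cases v)
  case (N1 i)
  then show ?thesis
    using N1_in_gad_rel_lin_or_flip_iff[of "lin n" n a i] N1_in_gad_rel_lin_or_flip_iff[of "lin_flip n a" n a i] a
    by simp
qed (use a in \<open>auto simp: flip_pair_def lin_flip_def lin_def\<close>)

lemma colour_flip_node:
  assumes "D \<le> a" "a + 2 + D < n"
  shows "colour n D (flip_node a v) = colour n D v"
proof -
  have "zone_of n D a = Mid" "zone_of n D (a + 2) = Mid"
    using assms by (auto simp: zone_of_eq_Mid_iff)
  then show ?thesis
    by (cases v) (simp_all add: flip_pair_def)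
qed

lemma card_colour_class_lin_flip:
  assumes "0 < a" "a + 3 < n" "D \<le> a" "a + 2 + D < n"
  shows "card {v \<in> verts (gad_rel n (lin n)). colour n D v = t} =
    card {v \<in> verts (gad_rel n (lin_flip n a)). colour n D v = t}"
proof -
  let ?F = "{v \<in> verts (gad_rel n (lin_flip n a)). colour n D v = t}"
  have eq: "{v \<in> verts (gad_rel n (lin n)). colour n D v = t} = flip_node a ` ?F"
  proof (intro equalityI subsetI)
    fix x
    assume "x \<in> {v \<in> verts (gad_rel n (lin n)). colour n D v = t}"
    then have "flip_node a x \<in> ?F"
      using flip_node_in_verts_iff[OF assms(1,2), of "flip_node a x"]
        colour_flip_node[OF assms(3,4), of "flip_node a x"] by simp
    then show "x \<in> flip_node a ` ?F"
      by (metis flip_node_flip_node image_eqI)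
  qed (use flip_node_in_verts_iff[OF assms(1,2)] colour_flip_node[OF assms(3,4)] in auto)
  have "inj_on (flip_node a) ?F"
    by (metis flip_node_flip_node inj_onI)
  then show ?thesis
    unfolding eq by (rule card_image)
qed

section \<open>Equivalence of the two gadget graphs\<close>

lemma edge_from_Mid_lin_or_flip:
  assumes T: "T \<in> {lin n, lin_flip n a}" and a: "D \<le> a" "a + 2 + D < n"
    and i: "D \<le> i" "i + D < n" and j: "zone_of n D j \<noteq> Mid"
  shows "(i, j) \<in> T \<longleftrightarrow> j < n \<and> n \<le> j + D"
proof
  assume ij: "(i, j) \<in> T"
  have "j \<noteq> a"
    using j a by (auto simp: zone_of_eq_Mid_iff)
  then have "i < j"
    using lin_or_flip_memD[OF T ij] by auto
  moreover have "j < n"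
    using lin_or_flip_subset[OF T] ij a by auto
  ultimately show "j < n \<and> n \<le> j + D"
    using i j by (auto simp: zone_of_eq_Mid_iff)
next
  assume "j < n \<and> n \<le> j + D"
  then show "(i, j) \<in> T"
    using i a by (intro lin_or_flip_memI[OF T]) auto
qed

lemma edge_to_Mid_lin_or_flip:
  assumes T: "T \<in> {lin n, lin_flip n a}" and a: "D \<le> a" "a + 2 + D < n"
    and i: "D \<le> i" "i + D < n" and j: "zone_of n D j \<noteq> Mid"
  shows "(j, i) \<in> T \<longleftrightarrow> j < D"
proof
  assume ji: "(j, i) \<in> T"
  have "j \<noteq> a + 2"
    using j a by (auto simp: zone_of_eq_Mid_iff)
  then have "j < i"
    using lin_or_flip_memD[OF T ji] by auto
  then show "j < D"
    using i j by (auto simp: zone_of_eq_Mid_iff)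
next
  assume "j < D"
  then show "(j, i) \<in> T"
    using i a by (intro lin_or_flip_memI[OF T]) auto
qed

lemma card_nbrs_N1_outside_Mid:
  assumes T: "T \<in> {lin n, lin_flip n a}" and a: "D \<le> a" "a + 2 + D < n"
    and i: "D \<le> i" "i + D < n" and t: "t \<noteq> N2 (Mid, Mid)" "t \<noteq> N3 (Mid, Mid)"
  shows "card {v. (N1 i, v) \<in> edges (gad_rel n T) \<and> colour n D v = t} =
    card {j. j < n \<and> n \<le> j + D \<and> N2 (Mid, zone_of n D j) = t} +
    card {j. j < D \<and> N3 (zone_of n D j, Mid) = t}"
proof -
  have "zone_of n D i = Mid"
    using i by (simp add: zone_of_eq_Mid_iff)
  moreover have "{j. (i, j) \<in> T \<and> N2 (Mid, zone_of n D j) = t} =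
      {j. j < n \<and> n \<le> j + D \<and> N2 (Mid, zone_of n D j) = t}"
    using edge_from_Mid_lin_or_flip[OF T a i] t(1) by blast
  moreover have "{j. (j, i) \<in> T \<and> N3 (zone_of n D j, Mid) = t} = {j. j < D \<and> N3 (zone_of n D j, Mid) = t}"
    using edge_to_Mid_lin_or_flip[OF T a i] t(2) by blast
  moreover have "finite (edges (rel_graph n T))"
    using finite_lin_or_flip[OF T] a by simp
  ultimately show ?thesis
    using card_gad_nbrs_N1[of "rel_graph n T" i "\<lambda>v. colour n D v = t"] by simp
qed

lemma card_nbrs_N1_Mid_large:
  assumes T: "T \<in> {lin n, lin_flip n a}" and p: "K + 3 \<le> B" "D + B \<le> a" "a + 2 + D + B < n"
    and i: "D + B \<le> i" "i + D + B < n"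
    and t: "t \<in> {N2 (Mid, Mid), N3 (Mid, Mid)}" and r: "r \<in> {1, 2}"
  shows "K \<le> card (pos_class (gad_rel n T) (colour n D) (N1 i) t r)"
proof -
  note mem = lin_or_flip_memI[OF T]
  have mid: "zone_of n D p = Mid" if "D \<le> p" "p + D < n" for p
    using that by (simp add: zone_of_eq_Mid_iff)
  have "\<exists>w. inj_on w {..<K} \<and> w ` {..<K} \<subseteq> pos_class (gad_rel n T) (colour n D) (N1 i) t r"
  proof -
    \<comment> \<open>The offset 3 keeps the neighbour witnesses off the reversed pair \<open>(a, a + 2)\<close>.\<close>
    consider "t = N2 (Mid, Mid)" "r = 1" | "t = N3 (Mid, Mid)" "r = 1"
      | "t = N2 (Mid, Mid)" "r = 2" | "t = N3 (Mid, Mid)" "r = 2"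
      using t r by blast
    then show ?thesis
    proof cases
      case 1
      show ?thesis
        by (rule exI[of _ "\<lambda>j. N2 (i, i + 3 + j)"])
          (use 1 p i in \<open>auto simp: inj_on_def pos_class_def rel_pos_def intro!: mem mid\<close>)
    next
      case 2
      show ?thesis
        by (rule exI[of _ "\<lambda>j. N3 (i - 3 - j, i)"])
          (use 2 p i in \<open>auto simp: inj_on_def pos_class_def rel_pos_def intro!: mem mid\<close>)
    next
      case 3
      show ?thesis
        by (rule exI[of _ "\<lambda>j. N2 (D, D + 1 + j)"])
          (use 3 p i in \<open>auto simp: inj_on_def pos_class_def rel_pos_def intro!: mem mid\<close>)
    next
      case 4
      show ?thesis
        by (rule exI[of _ "\<lambda>j. N3 (D, D + 1 + j)"])
          (use 4 p i in \<open>auto simp: inj_on_def pos_class_def rel_pos_def intro!: mem mid\<close>)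
    qed
  qed
  then obtain w where w: "inj_on w {..<K}" "w ` {..<K} \<subseteq> pos_class (gad_rel n T) (colour n D) (N1 i) t r"
    by blast
  have "finite (pos_class (gad_rel n T) (colour n D) (N1 i) t r)"
    using ugraph_gad_rel_lin_or_flip[OF T] p by (auto simp: pos_class_def ugraph_def dgraph_def)
  then show ?thesis
    using card_inj_on_le[OF w] by simp
qed

lemma gad_lin_flip_N1_edges_eq:
  "i \<noteq> a \<Longrightarrow> i \<noteq> a + 2 \<Longrightarrow>
    (N1 i, v) \<in> edges (gad_rel n (lin n)) \<longleftrightarrow> (N1 i, v) \<in> edges (gad_rel n (lin_flip n a))"
  by (cases v) (auto simp: lin_flip_def lin_def)

lemma nbr_counts_agree_N1:
  assumes p: "K + 3 \<le> B" "D + B \<le> a" "a + 2 + D + B < n"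
    and i: "i < n" "i' < n" and z: "zone_of n (D + B) i = zone_of n (D + B) i'"
  shows "nbr_counts_agree K (gad_rel n (lin n)) (gad_rel n (lin_flip n a)) (colour n D) (colour n D)
    (N1 i) (N1 i')"
proof -
  let ?L = "gad_rel n (lin n)" and ?F = "gad_rel n (lin_flip n a)"
  have T: "lin n \<in> {lin n, lin_flip n a}" "lin_flip n a \<in> {lin n, lin_flip n a}"
    by simp_all
  have ug: "ugraph ?L" "ugraph ?F"
    using ugraph_gad_rel_lin_or_flip[OF T(1)] ugraph_gad_rel_lin_or_flip[OF T(2)] p by simp_all
  show ?thesis
  proof (cases "zone_of n (D + B) i = Mid")
    case True
    moreover have "zone_of n (D + B) i' = Mid"
      using True z by simp
    ultimately have mid: "D + B \<le> i" "i + D + B < n" "D + B \<le> i'" "i' + D + B < n"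
      unfolding zone_of_eq_Mid_iff by linarith+
    have "card (pos_class ?L (colour n D) (N1 i) t 1) = card (pos_class ?F (colour n D) (N1 i') t 1) \<or>
        (K \<le> card (pos_class ?L (colour n D) (N1 i) t 1) \<and> K \<le> card (pos_class ?F (colour n D) (N1 i') t 1) \<and>
         K \<le> card (pos_class ?L (colour n D) (N1 i) t 2) \<and> K \<le> card (pos_class ?F (colour n D) (N1 i') t 2))"
      for t
    proof (cases "t \<in> {N2 (Mid, Mid), N3 (Mid, Mid)}")
      case True
      then show ?thesis
        using card_nbrs_N1_Mid_large[OF T(1) p mid(1,2) True] card_nbrs_N1_Mid_large[OF T(2) p mid(3,4) True]
        by simp
    next
      case False
      have "D \<le> a" "a + 2 + D < n" "D \<le> i" "i + D < n" "D \<le> i'" "i' + D < n"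
        using p mid by linarith+
      then show ?thesis
        using False card_nbrs_N1_outside_Mid[OF T(1), of D i t] card_nbrs_N1_outside_Mid[OF T(2), of D i' t]
        unfolding pos_class_1[OF ug(1)] pos_class_1[OF ug(2)] by simp
    qed
    then show ?thesis
      by (simp add: nbr_counts_agree_def)
  next
    case False
    then have ii: "i' = i"
      using zone_of_eq_imp_eq[OF i z] by simp
    have "zone_of n (D + B) a = Mid" "zone_of n (D + B) (a + 2) = Mid"
      using p by (auto simp: zone_of_eq_Mid_iff)
    then have "i \<noteq> a" "i \<noteq> a + 2"
      using False by auto
    then have "(N1 i, v) \<in> edges ?L \<longleftrightarrow> (N1 i, v) \<in> edges ?F" for v
      by (rule gad_lin_flip_N1_edges_eq)
    then have "pos_class ?L (colour n D) (N1 i) t 1 = pos_class ?F (colour n D) (N1 i') t 1" for t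
      unfolding pos_class_1[OF ug(1)] pos_class_1[OF ug(2)] ii by blast
    then show ?thesis
      by (simp add: nbr_counts_agree_def)
  qed
qed

lemma card_filter_pair_eq:
  fixes p q p' q' :: 'a
  assumes "p \<noteq> q" "p' \<noteq> q'" "c p = c' p'" "c q = c' q'"
  shows "card {v \<in> {p, q}. c v = t} = card {v \<in> {p', q'}. c' v = t}"
proof -
  have split: "{v \<in> {p, q}. P v} = (if P p then {p} else {}) \<union> (if P q then {q} else {})"
    for p q :: 'a and P
    by auto
  show ?thesis
    unfolding split[of p q] split[of p' q'] using assms by auto
qed

lemma card_gad_nbrs_edge_node:
  assumes x: "x \<in> verts (gad G)" "x' \<in> verts (gad G')" and N1: "\<nexists>i. x = N1 i"
    and c: "colour n D x = colour n D x'"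
  shows "card {v. (x, v) \<in> edges (gad G) \<and> colour n D v = t} =
    card {v. (x', v) \<in> edges (gad G') \<and> colour n D v = t}"
proof (cases x)
  case (N2 e)
  then obtain e' where x': "x' = N2 e'"
    using c by (cases x') auto
  have "e \<in> edges G" "e' \<in> edges G'"
    using x N2 x' by simp_all
  show ?thesis
    unfolding N2 x' gad_nbrs_N2[OF \<open>e \<in> edges G\<close>] gad_nbrs_N2[OF \<open>e' \<in> edges G'\<close>]
    by (rule card_filter_pair_eq) (use c N2 x' in simp_all)
next
  case (N3 e)
  then obtain e' where x': "x' = N3 e'"
    using c by (cases x') auto
  have "e \<in> edges G" "e' \<in> edges G'"
    using x N3 x' by simp_all
  show ?thesis
    unfolding N3 x' gad_nbrs_N3[OF \<open>e \<in> edges G\<close>] gad_nbrs_N3[OF \<open>e' \<in> edges G'\<close>]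
    by (rule card_filter_pair_eq) (use c N3 x' in simp_all)
qed (use N1 in simp)

lemma nbr_counts_agree_lin_flip:
  assumes p: "K + 3 \<le> B" "D + B \<le> a" "a + 2 + D + B < n"
    and x: "x \<in> verts (gad_rel n (lin n))" "x' \<in> verts (gad_rel n (lin_flip n a))"
    and c: "colour n (D + B) x = colour n (D + B) x'"
  shows "nbr_counts_agree K (gad_rel n (lin n)) (gad_rel n (lin_flip n a)) (colour n D) (colour n D) x x'"
proof (cases "\<exists>i. x = N1 i")
  case True
  then obtain i i' where xi: "x = N1 i" "x' = N1 i'"
    using c by (metis colour_simps gnode.distinct gnode.exhaust)
  have "i < n" "i' < n"
    using x p xi N1_in_gad_rel_lin_or_flip_iff[of "lin n" n a i]
      N1_in_gad_rel_lin_or_flip_iff[of "lin_flip n a" n a i'] by auto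
  then show ?thesis
    using nbr_counts_agree_N1[OF p] c xi by simp
next
  case False
  have a2: "a + 2 < n"
    using p by simp
  have c': "colour n D x = colour n D x'"
    using a2 x c by (rule colour_coarsen_lin_flip) simp
  have ug: "ugraph (gad_rel n (lin n))" "ugraph (gad_rel n (lin_flip n a))"
    using a2 ugraph_gad_rel_lin_or_flip[of "lin n" n a] ugraph_gad_rel_lin_or_flip[of "lin_flip n a" n a]
    by simp_all
  have "card (pos_class (gad_rel n (lin n)) (colour n D) x t 1) =
      card (pos_class (gad_rel n (lin_flip n a)) (colour n D) x' t 1)" for t
    unfolding pos_class_1[OF ug(1)] pos_class_1[OF ug(2)] by (rule card_gad_nbrs_edge_node[OF x False c'])
  then show ?thesis
    by (simp add: nbr_counts_agree_def)
qed

lemma capped_class_counts_lin_flip: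
  assumes p: "K + 3 \<le> B" "D + B \<le> a" "a + 2 + D + B < n"
    and x: "x \<in> verts (gad_rel n (lin n))" "x' \<in> verts (gad_rel n (lin_flip n a))"
    and c: "colour n (D + B) x = colour n (D + B) x'"
  shows "\<forall>t r. min K (card (pos_class (gad_rel n (lin n)) (colour n D) x t r)) =
    min K (card (pos_class (gad_rel n (lin_flip n a)) (colour n D) x' t r))"
proof (rule capped_class_counts_if_nbr_counts_agree[OF _ _ x])
  have a: "0 < a" "a + 2 < n" "a + 3 < n"
    using p by linarith+
  show "finite (verts (gad_rel n (lin n)))" "finite (verts (gad_rel n (lin_flip n a)))"
    using a ugraph_gad_rel_lin_or_flip[of "lin n" n a] ugraph_gad_rel_lin_or_flip[of "lin_flip n a" n a]
    by (simp_all add: ugraph_def dgraph_def)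
  show "colour n D x = colour n D x'"
    using a(2) x c by (rule colour_coarsen_lin_flip) simp
  show "card {v \<in> verts (gad_rel n (lin n)). colour n D v = t} =
      card {v \<in> verts (gad_rel n (lin_flip n a)). colour n D v = t}" for t
    using p a by (intro card_colour_class_lin_flip) simp_all
  show "nbr_counts_agree K (gad_rel n (lin n)) (gad_rel n (lin_flip n a)) (colour n D) (colour n D) x x'"
    by (rule nbr_counts_agree_lin_flip[OF p x c])
qed

text \<open>Each round of the game uses up \<open>B\<close> positions of resolution.\<close>

definition zone_rel :: "nat \<Rightarrow> nat \<Rightarrow> nat \<Rightarrow> nat \<Rightarrow> nat gnode \<Rightarrow> nat gnode \<Rightarrow> bool" where
  "zone_rel n a B m x y \<longleftrightarrow> x \<in> verts (gad_rel n (lin n)) \<and> y \<in> verts (gad_rel n (lin_flip n a)) \<and>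
     colour n (Suc m * B) x = colour n (Suc m * B) y"

lemma counting_bisim_lin_flip:
  assumes p: "K + 3 \<le> B" "Suc M * B \<le> a" "a + 2 + Suc M * B < n"
  shows "counting_bisim K M (gad_rel n (lin n)) (gad_rel n (lin_flip n a)) (zone_rel n a B)"
proof -
  let ?L = "gad_rel n (lin n)" and ?F = "gad_rel n (lin_flip n a)" and ?R = "zone_rel n a B"
  have a2: "a + 2 < n"
    using p by linarith
  have ug: "ugraph ?L" "ugraph ?F"
    using a2 ugraph_gad_rel_lin_or_flip[of "lin n" n a] ugraph_gad_rel_lin_or_flip[of "lin_flip n a" n a]
    by simp_all
  have down: "?R m x x'" if "?R (Suc m) x x'" for m x x'
  proof -
    have x: "x \<in> verts ?L" "x' \<in> verts ?F"
      and c: "colour n (Suc (Suc m) * B) x = colour n (Suc (Suc m) * B) x'"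
      using that by (simp_all add: zone_rel_def)
    have "colour n (Suc m * B) x = colour n (Suc m * B) x'"
      using a2 x c by (rule colour_coarsen_lin_flip) simp
    then show ?thesis
      using x by (simp add: zone_rel_def)
  qed
  have forth: "counting_forth K ?L ?F (?R (Suc m)) (?R m)"
    and backward: "counting_forth K ?F ?L (?R (Suc m))\<inverse>\<inverse> (?R m)\<inverse>\<inverse>" if "m < M" for m
  proof -
    have "Suc (Suc m) * B \<le> Suc M * B"
      using that by (intro mult_le_mono1) simp
    then have pm: "K + 3 \<le> B" "Suc m * B + B \<le> a" "a + 2 + Suc m * B + B < n"
      using p by simp_all
    have capped: "\<forall>t r. min K (card (pos_class ?L (colour n (Suc m * B)) x t r)) =
        min K (card (pos_class ?F (colour n (Suc m * B)) x' t r))" if "?R (Suc m) x x'" for x x'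
    proof (rule capped_class_counts_lin_flip[OF pm])
      show "x \<in> verts ?L" "x' \<in> verts ?F"
        "colour n (Suc m * B + B) x = colour n (Suc m * B + B) x'"
        using that by (simp_all add: zone_rel_def add.commute)
    qed
    show "counting_forth K ?L ?F (?R (Suc m)) (?R m)"
      by (rule counting_forth_if_capped_class_counts[OF ug capped]) (simp_all add: zone_rel_def)
    show "counting_forth K ?F ?L (?R (Suc m))\<inverse>\<inverse> (?R m)\<inverse>\<inverse>"
    proof (rule counting_forth_if_capped_class_counts[OF ug(2,1)])
      fix x' x
      assume "(?R (Suc m))\<inverse>\<inverse> x' x"
      then show "\<forall>t r. min K (card (pos_class ?F (colour n (Suc m * B)) x' t r)) =
          min K (card (pos_class ?L (colour n (Suc m * B)) x t r))"
        using capped[of x x'] by simp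
    qed (simp add: zone_rel_def)
  qed
  show ?thesis
    unfolding counting_bisim_def
    using colour_eq_imp_lab_eq down forth backward by (auto simp: zone_rel_def)
qed

lemma sat_gad_lin_eq_sat_gad_lin_flip:
  assumes p: "K + 3 \<le> B" "Suc M * B \<le> a" "a + 2 + Suc M * B < n"
    and \<phi>: "qdepth \<phi> \<le> M" "count_bound \<phi> \<le> K"
  shows "sat (gad_rel n (lin n)) \<phi> (\<lambda>_. N1 0) = sat (gad_rel n (lin_flip n a)) \<phi> (\<lambda>_. N1 0)"
proof -
  let ?L = "gad_rel n (lin n)" and ?F = "gad_rel n (lin_flip n a)"
  have a: "0 < a" "a + 2 < n" "a + 3 < n"
    using p by (auto intro: order.strict_trans2[of 0 B])
  have ug: "ugraph ?L" "ugraph ?F"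
    using a ugraph_gad_rel_lin_or_flip[of "lin n" n a] ugraph_gad_rel_lin_or_flip[of "lin_flip n a" n a]
    by simp_all
  have "N1 0 \<in> verts ?L" "N1 0 \<in> verts ?F"
    using a N1_in_gad_rel_lin_or_flip_iff[of "lin n" n a 0] N1_in_gad_rel_lin_or_flip_iff[of "lin_flip n a" n a 0]
    by simp_all
  then have "atomic_match ?L ?F (zone_rel n a B M) (\<lambda>_. N1 0) (\<lambda>_. N1 0)"
    by (simp add: atomic_match_def zone_rel_def)
  then show ?thesis
    by (rule sat_eq_if_counting_bisim[OF counting_bisim_lin_flip[OF p] ug \<phi>(1) order_refl \<phi>(2)])
qed

section \<open>Non-definability\<close>

instance gnode :: (countable) countable
  by countable_datatype

definition is_gad_order :: "'a graph \<Rightarrow> bool" where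
  "is_gad_order G \<longleftrightarrow> (\<exists>G' :: nat graph. dgraph G' \<and> strict_linear_order_on (verts G') (edges G')
     \<and> graph_iso 3 G (gad G'))"

definition classifies_gad_orders :: "c2 \<Rightarrow> bool" where
  "classifies_gad_orders \<phi> \<longleftrightarrow> (\<forall>(G :: nat graph) v. ugraph G \<longrightarrow> v \<in> verts G \<longrightarrow>
     (sat G \<phi> (\<lambda>_. v) \<longleftrightarrow> is_gad_order G))"

lemma is_gad_order_iso_map:
  assumes "iso_map 3 f G H"
  shows "is_gad_order H \<longleftrightarrow> is_gad_order G"
  using iso_map_comp[OF assms] iso_map_comp[OF iso_map_inv_into[OF assms]]
  unfolding is_gad_order_def graph_iso_iff_iso_map by blast

lemma sat_iff_is_gad_order_countable:
  fixes G :: "'a::countable graph"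
  assumes \<phi>: "classifies_gad_orders \<phi>" and G: "ugraph G" and v: "v \<in> verts G"
  shows "sat G \<phi> (\<lambda>_. v) \<longleftrightarrow> is_gad_order G"
proof -
  let ?H = "graph_image to_nat G"
  have inj: "inj_on to_nat (verts G)"
    by (simp add: inj_on_def)
  have iso: "iso_map 3 to_nat G ?H"
    using G inj by (intro iso_map_graph_image) (simp_all add: ugraph_def dgraph_def)
  have "sat G \<phi> (\<lambda>_. v) \<longleftrightarrow> sat ?H \<phi> (\<lambda>_. to_nat v)"
    using sat_iso_map[OF iso] v by simp
  also have "\<dots> \<longleftrightarrow> is_gad_order ?H"
    using \<phi> ugraph_graph_image[OF inj G] v by (simp add: classifies_gad_orders_def)
  also have "\<dots> \<longleftrightarrow> is_gad_order G"
    by (rule is_gad_order_iso_map[OF iso])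
  finally show ?thesis .
qed

lemma is_gad_order_lin: "is_gad_order (gad_rel n (lin n))"
proof -
  have "graph_iso 3 (gad_rel n (lin n)) (gad_rel n (lin n))"
    unfolding graph_iso_iff_iso_map iso_map_def by (rule exI[of _ id]) simp
  then show ?thesis
    using dgraph_rel_graph_lin strict_linear_order_on_lin
    by (auto simp: is_gad_order_def intro!: exI[of _ "rel_graph n (lin n)"])
qed

lemma not_is_gad_order_lin_flip:
  assumes "a + 2 < n"
  shows "\<not> is_gad_order (gad_rel n (lin_flip n a))"
proof
  assume "is_gad_order (gad_rel n (lin_flip n a))"
  then obtain G' :: "nat graph" and f where G': "dgraph G'" "strict_linear_order_on (verts G') (edges G')"
    and f: "iso_map 3 f (gad_rel n (lin_flip n a)) (gad G')"
    unfolding is_gad_order_def graph_iso_iff_iso_map by blast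
  have "trans (edges G')"
    using G'(2) by (simp add: strict_linear_order_on_def)
  then show False
    using gad_iso_map_triangle[OF f] lin_flip_triangle[OF assms] G'(1) by (auto simp: dgraph_def)
qed

lemma not_classifies_gad_orders: "\<not> classifies_gad_orders \<phi>"
proof
  assume \<phi>: "classifies_gad_orders \<phi>"
  define B where "B = count_bound \<phi> + 3"
  define a where "a = Suc (qdepth \<phi>) * B"
  define n where "n = a + 3 + Suc (qdepth \<phi>) * B"
  have p: "count_bound \<phi> + 3 \<le> B" "Suc (qdepth \<phi>) * B \<le> a" "a + 2 + Suc (qdepth \<phi>) * B < n"
    by (simp_all add: B_def a_def n_def)
  have a: "0 < a" "a + 2 < n" "a + 3 < n"
    by (simp_all add: B_def a_def n_def)
  have classify: "sat (gad_rel n T) \<phi> (\<lambda>_. N1 0) \<longleftrightarrow> is_gad_order (gad_rel n T)"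
    if "T \<in> {lin n, lin_flip n a}" for T
  proof -
    have "N1 0 \<in> verts (gad_rel n T)"
      using N1_in_gad_rel_lin_or_flip_iff[OF that a(1,3), of 0] a(2) by simp
    then show ?thesis
      by (rule sat_iff_is_gad_order_countable[OF \<phi> ugraph_gad_rel_lin_or_flip[OF that a(2)]])
  qed
  have "sat (gad_rel n (lin n)) \<phi> (\<lambda>_. N1 0)"
    using classify[of "lin n"] is_gad_order_lin by simp
  then have "sat (gad_rel n (lin_flip n a)) \<phi> (\<lambda>_. N1 0)"
    using sat_gad_lin_eq_sat_gad_lin_flip[OF p] by simp
  then show False
    using classify[of "lin_flip n a"] not_is_gad_order_lin_flip[OF a(2)] by simp
qed

theorem theorem6:
  shows "\<not> (\<exists>\<phi> :: c2. fv \<phi> \<subseteq> {X} \<and>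
     (\<forall>(G :: nat graph) v. ugraph G \<longrightarrow> v \<in> verts G \<longrightarrow>
        (sat G \<phi> (\<lambda>_. v) \<longleftrightarrow>
         (\<exists>G' :: nat graph. dgraph G' \<and> strict_linear_order_on (verts G') (edges G')
              \<and> graph_iso 3 G (gad G')))))"
  \<comment> \<open>\<open>\<phi>\<close> is only evaluated under constant assignments, so its free variables do not matter.\<close>
  using not_classifies_gad_orders unfolding classifies_gad_orders_def is_gad_order_def by blast

end
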